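(* Let $\Phi \in \mathbb{R}^{M \times N}$, let $\Lambda \subset \{1, 2, \dots, N\}$, and let $\widetilde{x} \in \mathbb{R}^N$ with $\mathrm{supp}(\widetilde{x}) \cap \Lambda = \emptyset$. Define $h = A_\Lambda^T A_\Lambda \widetilde{x}$. If $\Phi$ satisfies the restricted isometry property of order $\|\widetilde{x}\|_0 + |\Lambda| + 1$ with isometry constant $\delta$, then $$|h(j) - \widetilde{x}(j)| \le \frac{\delta}{1-\delta}\|\widetilde{x}\|_2$$ for all $j \notin \Lambda$.
   Context: For $x \in \mathbb{R}^N$, $\|x\|_0 := |\mathrm{supp}(x)|$. A matrix $\Phi \in \mathbb{R}^{M\times N}$ satisfies the restricted isometry property (RIP) of order $K$ with isometry constant $\delta \in (0,1)$ if $(1-\delta)\|x\|_2^2 \le \|\Phi x\|_2^2 \le (1+\delta)\|x\|_2^2$ for all $x \in \mathbb{R}^N$ with $\|x\|_0 \le K$. For $\Lambda \subset \{1,\dots,N\}$, $\Phi_\Lambda$ is the submatrix of $\Phi$ consisting of the columns indexed by $\Lambda$, $P_\Lambda$ is the orthogonal projection onto the column space of $\Phi_\Lambda$, $P_\Lambda^\perp = I - P_\Lambda$, and $A_\Lambda := P_\Lambda^\perp \Phi$. *)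

theory Defs
  imports "HOL-Analysis.Analysis"
begin

definition supp :: "real^'n \<Rightarrow> 'n set" where
  "supp x = {i. x $ i \<noteq> 0}"

definition l0 :: "real^'n \<Rightarrow> nat" where
  "l0 x = card (supp x)"

definition RIP :: "real^'n^'m \<Rightarrow> nat \<Rightarrow> real \<Rightarrow> bool" where
  "RIP Phi K \<delta> \<longleftrightarrow> 0 < \<delta> \<and> \<delta> < 1 \<and>
     (\<forall>x. l0 x \<le> K \<longrightarrow>
        (1 - \<delta>) * (norm x)\<^sup>2 \<le> (norm (Phi *v x))\<^sup>2 \<and>
        (norm (Phi *v x))\<^sup>2 \<le> (1 + \<delta>) * (norm x)\<^sup>2)"

definition orth_proj :: "('a::real_inner) set \<Rightarrow> 'a \<Rightarrow> 'a" where
  "orth_proj W v = (THE p. p \<in> W \<and> (\<forall>w\<in>W. inner (v - p) w = 0))"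

definition P_Lam :: "real^'n^'m \<Rightarrow> 'n set \<Rightarrow> real^'m \<Rightarrow> real^'m" where
  "P_Lam Phi Lam v = orth_proj (span {column i Phi | i. i \<in> Lam}) v"

(* A_Lambda = (I - P_Lambda) Phi, as a matrix *)
definition A_Lam :: "real^'n^'m \<Rightarrow> 'n set \<Rightarrow> real^'n^'m" where
  "A_Lam Phi Lam = (\<chi> r j. (column j Phi - P_Lam Phi Lam (column j Phi)) $ r)"

end

theory Submission
  imports Defs
begin

text \<open>Write \<open>A = A\<^sub>\<Lambda>\<close> and \<open>T = supp x \<union> {j}\<close>. Then \<open>h(j) - x(j) = \<langle>A e\<^sub>j, A x\<rangle> - \<langle>e\<^sub>j, x\<rangle>\<close>, and
  by polarization it suffices that \<open>A\<close> is a near-isometry with constant \<open>\<delta>/(1-\<delta>)\<close> on vectors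
  supported in \<open>T\<close>. For such \<open>w\<close>, \<open>\<Phi> w = A w + \<Phi> z\<close> with \<open>supp z \<subseteq> \<Lambda>\<close> and \<open>A w \<bottom> \<Phi> z\<close>, so
  \<open>\<parallel>A w\<parallel>\<^sup>2 = \<parallel>\<Phi> w\<parallel>\<^sup>2 - \<parallel>\<Phi> z\<parallel>\<^sup>2\<close>. Since \<open>w \<bottom> z\<close>, the RIP of \<open>\<Phi>\<close> on \<open>T \<union> \<Lambda>\<close> gives
  \<open>\<parallel>\<Phi> z\<parallel>\<^sup>2 = \<langle>\<Phi> w, \<Phi> z\<rangle> \<le> \<delta> \<parallel>w\<parallel> \<parallel>z\<parallel> \<le> \<delta> \<parallel>w\<parallel> \<parallel>\<Phi> z\<parallel> / \<surd>(1-\<delta>)\<close>, i.e.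
  \<open>\<parallel>\<Phi> z\<parallel>\<^sup>2 \<le> \<delta>\<^sup>2 \<parallel>w\<parallel>\<^sup>2 / (1-\<delta>)\<close>, which turns the RIP bounds of \<open>\<Phi>\<close> into those claimed for \<open>A\<close>.\<close>

lemma subspace_supp_subset: "subspace {w :: real^'n. supp w \<subseteq> S}"
  unfolding subspace_def supp_def by (auto simp: subset_iff) (metis add.right_neutral)

lemma l0_le_card: "supp w \<subseteq> S \<Longrightarrow> l0 w \<le> card S"
  unfolding l0_def by (rule card_mono) auto

lemma inner_eq_0_if_disjoint_supp: "supp w \<inter> supp z = {} \<Longrightarrow> w \<bullet> z = 0"
  for w z :: "real^'n"
  unfolding inner_vec_def supp_def by (rule sum.neutral) (auto simp: disjoint_iff)

lemma RIP_supp_subset: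
  assumes "RIP Phi K \<delta>" "card S \<le> K" "supp w \<subseteq> S"
  shows "(1 - \<delta>) * (norm w)\<^sup>2 \<le> (norm (Phi *v w))\<^sup>2 \<and> (norm (Phi *v w))\<^sup>2 \<le> (1 + \<delta>) * (norm w)\<^sup>2"
  using assms l0_le_card[OF assms(3)] unfolding RIP_def by (meson order_trans)

lemma linear_near_isometry_inner_bound:
  fixes f :: "'a::real_inner \<Rightarrow> 'b::real_inner"
  assumes f: "linear f" and V: "subspace V"
    and near: "\<And>w. w \<in> V \<Longrightarrow>
      (1 - d) * (norm w)\<^sup>2 \<le> (norm (f w))\<^sup>2 \<and> (norm (f w))\<^sup>2 \<le> (1 + d) * (norm w)\<^sup>2"
    and u: "u \<in> V" and v: "v \<in> V"
  shows "\<bar>f u \<bullet> f v - u \<bullet> v\<bar> \<le> d * norm u * norm v"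
proof (cases "u = 0 \<or> v = 0")
  case True
  then show ?thesis by (auto simp: linear_0[OF f])
next
  case False
  define a where "a = (1 / norm u) *\<^sub>R u"
  define b where "b = (1 / norm v) *\<^sub>R v"
  have unit: "a \<bullet> a = 1" "b \<bullet> b = 1"
    using False by (auto simp: a_def b_def simp flip: power2_norm_eq_inner)
  have "a + b \<in> V" "a - b \<in> V"
    using u v V by (auto simp: a_def b_def subspace_add subspace_diff subspace_scale)
  then have "(1 - d) * (norm (a + b))\<^sup>2 \<le> (norm (f (a + b)))\<^sup>2"
    "(norm (f (a + b)))\<^sup>2 \<le> (1 + d) * (norm (a + b))\<^sup>2"
    "(1 - d) * (norm (a - b))\<^sup>2 \<le> (norm (f (a - b)))\<^sup>2"
    "(norm (f (a - b)))\<^sup>2 \<le> (1 + d) * (norm (a - b))\<^sup>2"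
    using near by blast+
  \<comment> \<open>polarization: \<open>4\<langle>p, q\<rangle> = \<parallel>p + q\<parallel>\<^sup>2 - \<parallel>p - q\<parallel>\<^sup>2\<close>, and \<open>\<parallel>a + b\<parallel>\<^sup>2 + \<parallel>a - b\<parallel>\<^sup>2 = 4\<close>\<close>
  then have unit_bound: "\<bar>f a \<bullet> f b - a \<bullet> b\<bar> \<le> d"
    using unit by (simp add: power2_norm_eq_inner linear_add[OF f] linear_diff[OF f]
        inner_add inner_diff inner_commute abs_le_iff algebra_simps)
  have "u = norm u *\<^sub>R a" "v = norm v *\<^sub>R b"
    using False by (auto simp: a_def b_def)
  then have "f u \<bullet> f v - u \<bullet> v = norm u * norm v * (f a \<bullet> f b - a \<bullet> b)"
    by (metis (no_types, lifting) inner_scaleR_left inner_scaleR_right linear_scale[OF f]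
        right_diff_distrib mult.assoc)
  then have "\<bar>f u \<bullet> f v - u \<bullet> v\<bar> = norm u * norm v * \<bar>f a \<bullet> f b - a \<bullet> b\<bar>"
    by (simp add: abs_mult)
  also have "\<dots> \<le> norm u * norm v * d"
    using unit_bound by (simp add: mult_left_mono)
  finally show ?thesis by (simp add: mult_ac)
qed

lemma orth_proj_span:
  fixes S :: "'a::euclidean_space set"
  shows "orth_proj (span S) v \<in> span S"
    and "w \<in> span S \<Longrightarrow> (v - orth_proj (span S) v) \<bullet> w = 0"
proof -
  obtain y z where y: "y \<in> span S" and z: "\<And>w. w \<in> span S \<Longrightarrow> orthogonal z w"
    and vyz: "v = y + z"
    using orthogonal_subspace_decomp_exists by blast
  have "\<exists>!p. p \<in> span S \<and> (\<forall>w\<in>span S. (v - p) \<bullet> w = 0)"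
  proof
    show "y \<in> span S \<and> (\<forall>w\<in>span S. (v - y) \<bullet> w = 0)"
      using y z vyz by (auto simp: orthogonal_def)
  next
    fix p assume p: "p \<in> span S \<and> (\<forall>w\<in>span S. (v - p) \<bullet> w = 0)"
    have "p - y \<in> span S" using p y span_diff by blast
    then have "(v - y) \<bullet> (p - y) = 0" "(v - p) \<bullet> (p - y) = 0"
      using z vyz p by (auto simp: orthogonal_def)
    then have "(p - y) \<bullet> (p - y) = 0" by (simp add: inner_diff)
    then show "p = y" by simp
  qed
  from theI'[OF this] show "orth_proj (span S) v \<in> span S"
    and "w \<in> span S \<Longrightarrow> (v - orth_proj (span S) v) \<bullet> w = 0"
    unfolding orth_proj_def by blast+
qed

lemma span_columns_eq_image_supp:
  fixes Phi :: "real^'n^'m"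
  shows "span {column i Phi | i. i \<in> Lam} = (*v) Phi ` {z. supp z \<subseteq> Lam}"
proof
  have "subspace ((*v) Phi ` {z. supp z \<subseteq> Lam})"
    by (intro linear_subspace_image subspace_supp_subset) simp
  moreover have "column i Phi \<in> (*v) Phi ` {z. supp z \<subseteq> Lam}" if "i \<in> Lam" for i
    using that by (intro image_eqI[where x = "axis i 1"])
      (simp_all add: matrix_vector_mult_basis, auto simp: supp_def axis_def)
  ultimately show "span {column i Phi | i. i \<in> Lam} \<subseteq> (*v) Phi ` {z. supp z \<subseteq> Lam}"
    by (intro span_minimal) auto
next
  show "(*v) Phi ` {z. supp z \<subseteq> Lam} \<subseteq> span {column i Phi | i. i \<in> Lam}"
  proof clarify
    fix z :: "real^'n" assume z: "supp z \<subseteq> Lam"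
    have "z $ i *\<^sub>R column i Phi \<in> span {column i Phi | i. i \<in> Lam}" for i
    proof (cases "i \<in> Lam")
      case True
      then show ?thesis by (intro span_mul span_base) blast
    next
      case False
      then have "z $ i = 0" using z by (auto simp: supp_def)
      then show ?thesis by (simp add: span_zero)
    qed
    then show "Phi *v z \<in> span {column i Phi | i. i \<in> Lam}"
      by (simp add: matrix_mult_sum scalar_mult_eq_scaleR span_sum)
  qed
qed

lemma A_Lam_mult_eq_sum:
  "A_Lam Phi Lam *v v = (\<Sum>j\<in>UNIV. v $ j *\<^sub>R (column j Phi - P_Lam Phi Lam (column j Phi)))"
proof -
  have "column j (A_Lam Phi Lam) = column j Phi - P_Lam Phi Lam (column j Phi)" for j
    by (simp add: A_Lam_def column_def vec_eq_iff)
  then show ?thesis by (simp add: matrix_mult_sum scalar_mult_eq_scaleR)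
qed

lemma A_Lam_mult_orthogonal:
  fixes Phi :: "real^'n^'m"
  assumes "supp z \<subseteq> Lam"
  shows "(A_Lam Phi Lam *v v) \<bullet> (Phi *v z) = 0"
proof -
  have "Phi *v z \<in> span {column i Phi | i. i \<in> Lam}"
    using assms by (simp add: span_columns_eq_image_supp)
  then show ?thesis
    by (simp add: A_Lam_mult_eq_sum inner_sum_left P_Lam_def orth_proj_span(2))
qed

lemma A_Lam_mult_residual:
  fixes Phi :: "real^'n^'m"
  obtains z where "supp z \<subseteq> Lam" and "A_Lam Phi Lam *v v = Phi *v v - Phi *v z"
proof -
  have "Phi *v v - A_Lam Phi Lam *v v = (\<Sum>j\<in>UNIV. v $ j *\<^sub>R P_Lam Phi Lam (column j Phi))"
    unfolding A_Lam_mult_eq_sum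
    by (simp add: matrix_mult_sum scalar_mult_eq_scaleR sum_subtractf[symmetric] scaleR_diff_right)
  also have "\<dots> \<in> span {column i Phi | i. i \<in> Lam}"
    by (intro span_sum span_mul) (simp add: P_Lam_def orth_proj_span(1))
  finally show ?thesis
    using that by (auto simp: span_columns_eq_image_supp algebra_simps)
qed

lemma square_le_of_cauchy_schwarz_and_lower_bound:
  fixes a \<delta> p q :: real
  assumes "0 \<le> a" "\<delta> < 1" "0 \<le> \<delta>" "0 \<le> p" "0 \<le> q"
    and "a \<le> \<delta> * p * q" and "(1 - \<delta>) * q\<^sup>2 \<le> a"
  shows "a \<le> \<delta>\<^sup>2 * p\<^sup>2 / (1 - \<delta>)"
proof (cases "a = 0")
  case True
  then show ?thesis using assms by simp
next
  case False
  with \<open>0 \<le> a\<close> have "0 < a" by simp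
  have "a * a \<le> (\<delta> * p * q)\<^sup>2"
    using assms by (metis power2_eq_square power_mono)
  also have "\<dots> = \<delta>\<^sup>2 * p\<^sup>2 * q\<^sup>2" by (simp add: power_mult_distrib)
  also have "\<dots> \<le> \<delta>\<^sup>2 * p\<^sup>2 * (a / (1 - \<delta>))"
    using assms by (intro mult_left_mono) (simp_all add: pos_le_divide_eq mult.commute)
  also have "\<dots> = a * (\<delta>\<^sup>2 * p\<^sup>2 / (1 - \<delta>))" by simp
  finally show ?thesis
    using \<open>0 < a\<close> by (rule mult_left_le_imp_le)
qed

lemma A_Lam_near_isometry:
  fixes Phi :: "real^'n^'m"
  assumes rip: "RIP Phi K \<delta>" and disj: "T \<inter> Lam = {}" and card: "card T + card Lam \<le> K"
    and w: "supp w \<subseteq> T"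
  shows "(1 - \<delta> / (1 - \<delta>)) * (norm w)\<^sup>2 \<le> (norm (A_Lam Phi Lam *v w))\<^sup>2 \<and>
         (norm (A_Lam Phi Lam *v w))\<^sup>2 \<le> (1 + \<delta> / (1 - \<delta>)) * (norm w)\<^sup>2"
proof -
  have \<delta>: "0 < \<delta>" "\<delta> < 1" using rip by (auto simp: RIP_def)
  obtain z where z: "supp z \<subseteq> Lam" and Aw: "A_Lam Phi Lam *v w = Phi *v w - Phi *v z"
    by (rule A_Lam_mult_residual)
  have "(Phi *v w - Phi *v z) \<bullet> (Phi *v z) = 0"
    using A_Lam_mult_orthogonal[OF z] by (simp flip: Aw)
  then have proj_sq: "(norm (Phi *v z))\<^sup>2 = (Phi *v w) \<bullet> (Phi *v z)"
    by (simp add: inner_diff_left power2_norm_eq_inner)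
  have norm_Aw: "(norm (A_Lam Phi Lam *v w))\<^sup>2 = (norm (Phi *v w))\<^sup>2 - (norm (Phi *v z))\<^sup>2"
    using proj_sq by (simp add: Aw power2_norm_eq_inner inner_diff inner_commute)
  have card_Un: "card (T \<union> Lam) \<le> K" using card_Un_le[of T Lam] card by linarith
  have "\<bar>(Phi *v w) \<bullet> (Phi *v z) - w \<bullet> z\<bar> \<le> \<delta> * norm w * norm z"
    using w z RIP_supp_subset[OF rip card_Un]
    by (intro linear_near_isometry_inner_bound[OF _ subspace_supp_subset[of "T \<union> Lam"]]) auto
  moreover have "w \<bullet> z = 0"
    using w z disj by (intro inner_eq_0_if_disjoint_supp) blast
  ultimately have "(norm (Phi *v z))\<^sup>2 \<le> \<delta> * norm w * norm z"
    using proj_sq by simp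
  moreover have "(1 - \<delta>) * (norm z)\<^sup>2 \<le> (norm (Phi *v z))\<^sup>2"
    using RIP_supp_subset[OF rip _ z] card by simp
  ultimately have proj_bound: "(norm (Phi *v z))\<^sup>2 \<le> \<delta>\<^sup>2 * (norm w)\<^sup>2 / (1 - \<delta>)"
    using \<delta> by (intro square_le_of_cauchy_schwarz_and_lower_bound) auto
  have rip_w: "(1 - \<delta>) * (norm w)\<^sup>2 \<le> (norm (Phi *v w))\<^sup>2"
    "(norm (Phi *v w))\<^sup>2 \<le> (1 + \<delta>) * (norm w)\<^sup>2"
    using RIP_supp_subset[OF rip _ w] card by simp_all
  have "(1 - \<delta> / (1 - \<delta>)) * (norm w)\<^sup>2
      = (1 - \<delta>) * (norm w)\<^sup>2 - \<delta>\<^sup>2 * (norm w)\<^sup>2 / (1 - \<delta>)"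
    using \<delta> by (simp add: field_simps power2_eq_square)
  also have "\<dots> \<le> (norm (A_Lam Phi Lam *v w))\<^sup>2"
    using rip_w proj_bound norm_Aw by linarith
  finally have lower: "(1 - \<delta> / (1 - \<delta>)) * (norm w)\<^sup>2 \<le> (norm (A_Lam Phi Lam *v w))\<^sup>2" .
  have "(1 + \<delta>) * (norm w)\<^sup>2 \<le> (1 + \<delta> / (1 - \<delta>)) * (norm w)\<^sup>2"
    using \<delta> by (intro mult_right_mono) (simp_all add: le_divide_eq)
  then have upper: "(norm (A_Lam Phi Lam *v w))\<^sup>2 \<le> (1 + \<delta> / (1 - \<delta>)) * (norm w)\<^sup>2"
    using rip_w norm_Aw by (smt (verit) zero_le_power2)
  show ?thesis using lower upper ..
qed

lemma transpose_mult_component: "(transpose A *v y) $ j = column j A \<bullet> y"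
  for A :: "real^'n^'m"
  by (simp add: matrix_vector_mult_def transpose_def inner_vec_def column_def mult.commute)

theorem lemma3:
  fixes Phi :: "real^'n^'m" and Lam :: "'n set" and x :: "real^'n" and \<delta> :: real
  assumes "supp x \<inter> Lam = {}"
    and "RIP Phi (l0 x + card Lam + 1) \<delta>"
  shows "\<forall>j. j \<notin> Lam \<longrightarrow>
    \<bar>(transpose (A_Lam Phi Lam) *v (A_Lam Phi Lam *v x)) $ j - x $ j\<bar> \<le> \<delta> / (1 - \<delta>) * norm x"
proof (intro allI impI)
  fix j assume j: "j \<notin> Lam"
  define T where "T = insert j (supp x)"
  have disj: "T \<inter> Lam = {}" using assms(1) j by (auto simp: T_def)
  have card: "card T + card Lam \<le> l0 x + card Lam + 1"
    unfolding T_def l0_def by (simp add: card_insert_if)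
  have "\<bar>(A_Lam Phi Lam *v axis j 1) \<bullet> (A_Lam Phi Lam *v x) - axis j 1 \<bullet> x\<bar>
      \<le> \<delta> / (1 - \<delta>) * norm (axis j (1::real)) * norm x"
    using A_Lam_near_isometry[OF assms(2) disj card]
    by (intro linear_near_isometry_inner_bound[OF _ subspace_supp_subset[of T]])
      (auto simp: T_def supp_def axis_def)
  then show "\<bar>(transpose (A_Lam Phi Lam) *v (A_Lam Phi Lam *v x)) $ j - x $ j\<bar> \<le> \<delta> / (1 - \<delta>) * norm x"
    unfolding transpose_mult_component by (simp add: matrix_vector_mult_basis inner_axis')
qed

end
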